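(* Let $\mathbb{K}$ be a field of characteristic $0$, let $F(n)$ be a holonomic sequence of order $J>0$, and let $L=\sum_{i=0}^{J}a_i(n)\sigma^i\in\operatorname{ann}F(n)$ with $a_0(n)a_J(n)\neq0$. Let $a(n),b(n)\in\mathbb{K}[n]$ be such that $\frac{a(n)}{b(n)}F(n)$ is summable. Suppose that for every $h\in\mathbb{N}=\{0,1,2,\dots\}$, \[\gcd(a_0(n),a_J(n+h))=\gcd(b(n),b(n+J+h))=1\] and \[\gcd(a_0(n),b(n+J+h))=\gcd(b(n),a_J(n+h))=1.\] Then $b(n)\mid a(n)$.
   Context: $\sigma$ is the shift operator, $L(F(n))=\sum_i a_i(n)F(n+i)$, $\operatorname{ann}F(n)=\{L\in\mathbb{K}[n][\sigma]:L(F(n))=0\}$, $F$ holonomic means $\operatorname{ann}F\neq\{0\}$, and the order of $F$ is the minimal order of a nonzero element of $\operatorname{ann}F$. A holonomic sequence $G(n)$ of order $J$ is summable if $G(n)=\Delta\big(\sum_{i=0}^{J-1}u_i(n)G(n+i)\big)$ for some rational functions $u_i(n)\in\mathbb{K}(n)$, where $\Delta=\sigma-1$. *)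

theory Defs
  imports "HOL-Computational_Algebra.Computational_Algebra"
begin

text \<open>A recurrence operator  L = sum_{i=0}^{J} c_i(n) sigma^i  is represented by its
coefficient function c (only c 0, ..., c J are used) together with the bound J.
Sequences are functions nat => 'k; as usual for holonomic sequences, identities are
required to hold for all sufficiently large n.\<close>

definition apply_op :: "(nat \<Rightarrow> 'k::field poly) \<Rightarrow> nat \<Rightarrow> (nat \<Rightarrow> 'k) \<Rightarrow> nat \<Rightarrow> 'k" where
  "apply_op c J F n = (\<Sum>i\<le>J. poly (c i) (of_nat n) * F (n + i))"

definition annihilates :: "(nat \<Rightarrow> 'k::field poly) \<Rightarrow> nat \<Rightarrow> (nat \<Rightarrow> 'k) \<Rightarrow> bool" where
  "annihilates c J F \<longleftrightarrow> eventually (\<lambda>n. apply_op c J F n = 0) sequentially"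

definition holonomic :: "(nat \<Rightarrow> 'k::field) \<Rightarrow> bool" where
  "holonomic F \<longleftrightarrow> (\<exists>J c. c J \<noteq> 0 \<and> annihilates c J F)"

definition hol_order :: "(nat \<Rightarrow> 'k::field) \<Rightarrow> nat" where
  "hol_order F = (LEAST J. \<exists>c. c J \<noteq> 0 \<and> annihilates c J F)"

definition rat_eval :: "'k::field poly \<Rightarrow> 'k poly \<Rightarrow> nat \<Rightarrow> 'k" where
  "rat_eval p q n = poly p (of_nat n) / poly q (of_nat n)"

text \<open>G holonomic of order J is summable iff G = Delta(sum_{i<J} u_i(n) G(n+i))
for rational functions u_i = p_i / q_i.\<close>
definition summable_hol :: "(nat \<Rightarrow> 'k::field) \<Rightarrow> bool" where
  "summable_hol G \<longleftrightarrow> holonomic G \<and>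
     (\<exists>p q :: nat \<Rightarrow> 'k poly. (\<forall>i < hol_order G. q i \<noteq> 0) \<and>
        eventually (\<lambda>n. G n =
            (\<Sum>i<hol_order G. rat_eval (p i) (q i) (n + 1) * G (n + 1 + i))
          - (\<Sum>i<hol_order G. rat_eval (p i) (q i) n * G (n + i))) sequentially)"

definition shift_poly :: "nat \<Rightarrow> 'k::field poly \<Rightarrow> 'k poly" where
  "shift_poly h p = p \<circ>\<^sub>p [:of_nat h, 1:]"

end

theory Submission
  imports Defs
begin

(* Write G = (a/b) F = Delta (sum_i u_i sigma^i G). Expanding Delta turns this into a recurrence
   sum_(i<=J) E_i F(n+i) = 0 of order J with rational coefficients E_i, and minimality of the order J
   forces E_i = Lambda c_i for one rational function Lambda = P/Q in lowest terms. Summing the E_i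
   along the adjoint, sum_i sigma^(J-i) E_i telescopes to -sigma^J (a/b), whence
   sigma^J (a/b) = - sum_i sigma^(J-i) (Lambda c_i).
   If Q were not a unit, pick an irreducible factor g of Q such that sigma^h g divides Q as well but
   no sigma^t g with t < 0 or t > h does. In the identity above, sigma^(J+h) g divides only the
   denominator of the term i = 0 and g only that of the term i = J; so sigma^h g divides b or c_0,
   and it divides sigma^(J+h) b or sigma^h c_J, against the gcd hypotheses. Hence Q is a unit, and the
   identity shows that sigma^J b divides sigma^J a. *)

section \<open>Translation of polynomials\<close>

definition translate :: "'a::comm_ring_1 \<Rightarrow> 'a poly \<Rightarrow> 'a poly" where
  "translate x p = p \<circ>\<^sub>p [:x, 1:]"

lemma poly_translate [simp]: "poly (translate x p) y = poly p (y + x)"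
  by (simp add: translate_def poly_pcompose add.commute)

lemma translate_translate [simp]: "translate x (translate y p) = translate (x + y) p"
  unfolding translate_def pcompose_assoc[symmetric] by (simp add: pcompose_pCons add.commute)

lemma translate_0 [simp]: "translate 0 p = p"
  by (simp add: translate_def)

lemma translate_mult [simp]: "translate x (p * q) = translate x p * translate x q"
  by (simp add: translate_def pcompose_mult)

lemma translate_1 [simp]: "translate x 1 = 1"
  by (simp add: translate_def pcompose_1)

lemma translate_inverse: "translate (- x) (translate x p) = p"
  by simp

lemma translate_eq_iff [simp]: "translate x p = translate x q \<longleftrightarrow> p = q"
  by (metis translate_inverse)

lemma translate_eq_0_iff [simp]: "translate x p = 0 \<longleftrightarrow> p = 0"
  by (metis translate_eq_iff pcompose_0 translate_def)

lemma translate_dvd_translate_iff [simp]: "translate x p dvd translate x q \<longleftrightarrow> p dvd q"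
  by (metis dvd_def translate_inverse translate_mult)

lemma translate_dvd_iff: "translate x p dvd q \<longleftrightarrow> p dvd translate (- x) q"
  by (metis translate_dvd_translate_iff translate_inverse)

lemma translate_dvd_translate_iff_diff:
  "translate x p dvd translate y q \<longleftrightarrow> translate (x - y) p dvd q"
  by (metis translate_dvd_iff translate_translate minus_diff_eq diff_conv_add_uminus add.commute)

lemma is_unit_translate_iff [simp]: "is_unit (translate x p) \<longleftrightarrow> is_unit p"
  by (metis translate_1 translate_dvd_translate_iff)

lemma lead_coeff_translate [simp]:
  fixes p :: "'a::idom poly"
  shows "lead_coeff (translate x p) = lead_coeff p"
  by (simp add: translate_def lead_coeff_comp)

lemma prime_elem_translate:
  fixes p :: "'a::field poly"
  assumes "prime_elem p" shows "prime_elem (translate x p)"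
proof (rule prime_elemI)
  show "translate x p \<noteq> 0" "\<not> is_unit (translate x p)"
    using assms by (simp_all add: prime_elem_def)
next
  fix q r assume "translate x p dvd q * r"
  then have "p dvd translate (- x) q * translate (- x) r"
    by (simp add: translate_dvd_iff)
  with assms show "translate x p dvd q \<or> translate x p dvd r"
    by (simp add: prime_elem_dvd_mult_iff translate_dvd_iff)
qed

lemma shift_poly_eq_translate: "shift_poly h p = translate (of_nat h) p"
  by (simp add: shift_poly_def translate_def)

lemma degree_0_if_translate_fixed:
  fixes g :: "'a::field_char_0 poly"
  assumes "translate d g = g" "d \<noteq> 0"
  shows "degree g = 0"
proof -
  have periodic: "poly g (of_nat m * d) = poly g 0" for m
  proof (induction m)
    case (Suc m)
    have "poly g (of_nat (Suc m) * d) = poly (translate d g) (of_nat m * d)"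
      by (simp add: algebra_simps)
    with Suc assms(1) show ?case by simp
  qed simp
  have "range (\<lambda>m::nat. of_nat m * d) \<subseteq> {x. poly (g - [:poly g 0:]) x = 0}"
    using periodic by auto
  moreover have "infinite (range (\<lambda>m::nat. of_nat m * d))"
    using assms(2) by (auto intro!: range_inj_infinite injI)
  ultimately have "g - [:poly g 0:] = 0"
    using poly_roots_finite finite_subset by blast
  then show ?thesis
    by (metis degree_pCons_0 eq_iff_diff_eq_0)
qed

lemma finite_translates_dvd:
  fixes g Q :: "'a::{field_char_0,field_gcd} poly"
  assumes "prime_elem g" "Q \<noteq> 0"
  shows "finite {t::int. translate (of_int t) g dvd Q}"
proof -
  let ?S = "{t::int. translate (of_int t) g dvd Q}"
  let ?m = "\<lambda>t::int. normalize (translate (of_int t) g)"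
  have "?m ` ?S \<subseteq> prime_factors Q"
    using assms by (auto simp: in_prime_factors_iff prime_elem_translate)
  then have "finite (?m ` ?S)"
    by (rule finite_subset) simp
  moreover have "inj_on ?m ?S"
  proof (rule inj_onI)
    fix s t assume "?m s = ?m t"
    moreover have "unit_factor (translate (of_int s) g) = unit_factor (translate (of_int t) g)"
      by (simp add: unit_factor_poly_def)
    ultimately have "translate (of_int s) g = translate (of_int t) g"
      by (metis unit_factor_mult_normalize)
    then have "translate (of_int (s - t)) g = g"
      by (metis translate_inverse translate_translate of_int_diff diff_conv_add_uminus add.commute)
    moreover have "\<not> degree g = 0"
      using assms(1) is_unit_iff_degree prime_elem_def by blast
    ultimately show "s = t"
      using degree_0_if_translate_fixed by fastforce
  qed
  ultimately show ?thesis
    by (rule finite_imageD)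
qed

lemma extremal_translates_dvd:
  fixes Q :: "'a::{field_char_0,field_gcd} poly"
  assumes "Q \<noteq> 0" "\<not> is_unit Q"
  obtains g h where "prime_elem g" "g dvd Q" "translate (of_nat h) g dvd Q"
    and "\<And>t::int. translate (of_int t) g dvd Q \<Longrightarrow> 0 \<le> t \<and> t \<le> int h"
proof -
  obtain g0 where "g0 dvd Q" "prime g0"
    using prime_divisor_exists[OF assms] by blast
  define S where "S = {t::int. translate (of_int t) g0 dvd Q}"
  have "finite S" "0 \<in> S"
    using finite_translates_dvd[of g0 Q] \<open>g0 dvd Q\<close> \<open>prime g0\<close> assms(1) by (simp_all add: S_def)
  define tmin tmax where "tmin = Min S" and "tmax = Max S"
  have S_bounds: "tmin \<le> t \<and> t \<le> tmax" if "t \<in> S" for t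
    using \<open>finite S\<close> that by (simp add: tmin_def tmax_def)
  have "tmin \<in> S" "tmax \<in> S"
    using \<open>finite S\<close> \<open>0 \<in> S\<close> unfolding tmin_def tmax_def by (auto intro!: Min_in Max_in)
  define g where "g = translate (of_int tmin) g0"
  have translate_g: "translate (of_int t) g = translate (of_int (t + tmin)) g0" for t
    by (simp add: g_def add.commute)
  show thesis
  proof
    show "prime_elem g"
      using \<open>prime g0\<close> by (simp add: g_def prime_elem_translate)
    show "g dvd Q"
      using \<open>tmin \<in> S\<close> by (simp add: S_def g_def)
    have "tmin \<le> tmax"
      using S_bounds \<open>tmax \<in> S\<close> by blast
    then show "translate (of_nat (nat (tmax - tmin))) g dvd Q"
      using \<open>tmax \<in> S\<close> translate_g[of "tmax - tmin"] by (simp add: S_def)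
    fix t :: int assume "translate (of_int t) g dvd Q"
    then show "0 \<le> t \<and> t \<le> int (nat (tmax - tmin))"
      using S_bounds[of "t + tmin"] by (simp add: translate_g S_def)
  qed
qed

section \<open>Rational sequences\<close>

lemma eventually_poly_of_nat_nonzero:
  fixes p :: "'a::field_char_0 poly"
  assumes "p \<noteq> 0"
  shows "eventually (\<lambda>n. poly p (of_nat n) \<noteq> 0) sequentially"
proof -
  have "finite (of_nat -` {x. poly p x = 0} :: nat set)"
    using poly_roots_finite[OF assms] by (rule finite_vimageI) (simp add: inj_of_nat)
  then show ?thesis
    by (simp add: cofinite_eq_sequentially[symmetric] eventually_cofinite)
qed

lemma poly_eqI_eventually:
  fixes p q :: "'a::field_char_0 poly"
  assumes "eventually (\<lambda>n. poly p (of_nat n) = poly q (of_nat n)) sequentially"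
  shows "p = q"
proof (rule ccontr)
  assume "p \<noteq> q"
  then have "eventually (\<lambda>n. poly (p - q) (of_nat n) \<noteq> 0) sequentially"
    by (intro eventually_poly_of_nat_nonzero) simp
  with assms have "eventually (\<lambda>_. False) sequentially"
    by eventually_elim simp
  then show False by simp
qed

definition rational_sequence :: "(nat \<Rightarrow> 'k::field) \<Rightarrow> bool" where
  "rational_sequence f \<longleftrightarrow> (\<exists>p q. q \<noteq> 0 \<and> eventually (\<lambda>n. f n = rat_eval p q n) sequentially)"

lemma rational_sequence_rat_eval: "q \<noteq> 0 \<Longrightarrow> rational_sequence (rat_eval p q)"
  unfolding rational_sequence_def by (intro exI[of _ p] exI[of _ q]) simp

lemma rational_sequence_poly: "rational_sequence (\<lambda>n. poly p (of_nat n))"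
  unfolding rational_sequence_def rat_eval_def by (intro exI[of _ p] exI[of _ 1]) simp

lemma rational_sequence_const: "rational_sequence (\<lambda>n. k)"
  using rational_sequence_poly[of "[:k:]"] by simp

lemma rational_sequence_uminus: "rational_sequence f \<Longrightarrow> rational_sequence (\<lambda>n. - f n)"
  unfolding rational_sequence_def
  by (metis (mono_tags, lifting) eventually_mono minus_divide_left poly_minus rat_eval_def)

lemma rational_sequence_add:
  fixes f g :: "nat \<Rightarrow> 'k::field_char_0"
  assumes "rational_sequence f" "rational_sequence g"
  shows "rational_sequence (\<lambda>n. f n + g n)"
proof -
  obtain p q p' q' where "q \<noteq> 0" "q' \<noteq> 0"
    and f: "eventually (\<lambda>n. f n = rat_eval p q n) sequentially"
    and g: "eventually (\<lambda>n. g n = rat_eval p' q' n) sequentially"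
    using assms unfolding rational_sequence_def by blast
  have "eventually (\<lambda>n. f n + g n = rat_eval (p * q' + p' * q) (q * q') n) sequentially"
    using f g eventually_poly_of_nat_nonzero[OF \<open>q \<noteq> 0\<close>] eventually_poly_of_nat_nonzero[OF \<open>q' \<noteq> 0\<close>]
    by eventually_elim (simp add: rat_eval_def add_frac_eq)
  with \<open>q \<noteq> 0\<close> \<open>q' \<noteq> 0\<close> show ?thesis
    unfolding rational_sequence_def by (intro exI[of _ "p * q' + p' * q"] exI[of _ "q * q'"]) simp
qed

lemma rational_sequence_mult:
  fixes f g :: "nat \<Rightarrow> 'k::field_char_0"
  assumes "rational_sequence f" "rational_sequence g"
  shows "rational_sequence (\<lambda>n. f n * g n)"
proof -
  obtain p q p' q' where "q \<noteq> 0" "q' \<noteq> 0"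
    and f: "eventually (\<lambda>n. f n = rat_eval p q n) sequentially"
    and g: "eventually (\<lambda>n. g n = rat_eval p' q' n) sequentially"
    using assms unfolding rational_sequence_def by blast
  from f g have "eventually (\<lambda>n. f n * g n = rat_eval (p * p') (q * q') n) sequentially"
    by eventually_elim (simp add: rat_eval_def)
  with \<open>q \<noteq> 0\<close> \<open>q' \<noteq> 0\<close> show ?thesis
    unfolding rational_sequence_def by (intro exI[of _ "p * p'"] exI[of _ "q * q'"]) simp
qed

lemma rational_sequence_diff:
  fixes f g :: "nat \<Rightarrow> 'k::field_char_0"
  assumes "rational_sequence f" "rational_sequence g"
  shows "rational_sequence (\<lambda>n. f n - g n)"
  using rational_sequence_add[OF assms(1) rational_sequence_uminus[OF assms(2)]] by simp

lemma rational_sequence_shift: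
  fixes f :: "nat \<Rightarrow> 'k::field_char_0"
  assumes "rational_sequence f"
  shows "rational_sequence (\<lambda>n. f (n + k))"
proof -
  obtain p q where "q \<noteq> 0" and f: "eventually (\<lambda>n. f n = rat_eval p q n) sequentially"
    using assms unfolding rational_sequence_def by blast
  have "eventually (\<lambda>n. f (n + k) = rat_eval p q (n + k)) sequentially"
    using f by (rule eventually_sequentially_seg[THEN iffD2])
  then have "eventually (\<lambda>n. f (n + k) =
      rat_eval (translate (of_nat k) p) (translate (of_nat k) q) n) sequentially"
    by (simp add: rat_eval_def)
  with \<open>q \<noteq> 0\<close> show ?thesis
    unfolding rational_sequence_def
    by (intro exI[of _ "translate (of_nat k) p"] exI[of _ "translate (of_nat k) q"]) simp
qed

lemma rational_sequence_if:
  "(P \<Longrightarrow> rational_sequence f) \<Longrightarrow> (\<not> P \<Longrightarrow> rational_sequence g) \<Longrightarrow>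
    rational_sequence (\<lambda>n. if P then f n else g n)"
  by (cases P) simp_all

section \<open>Annihilators\<close>

lemma eventually_all_le:
  fixes J :: nat
  assumes "\<And>i. i \<le> J \<Longrightarrow> eventually (P i) F"
  shows "eventually (\<lambda>x. \<forall>i\<le>J. P i x) F"
proof -
  have "eventually (\<lambda>x. \<forall>i\<in>{..J}. P i x) F"
    using assms by (intro eventually_ball_finite) auto
  then show ?thesis
    by (simp add: Ball_def)
qed

lemma hol_order_le:
  assumes "c m \<noteq> 0" "annihilates c m F"
  shows "hol_order F \<le> m"
  unfolding hol_order_def by (rule Least_le) (use assms in blast)

lemma holonomic_imp_minimal_annihilator:
  "holonomic F \<Longrightarrow> \<exists>c. c (hol_order F) \<noteq> 0 \<and> annihilates c (hol_order F) F"
  unfolding holonomic_def hol_order_def by (rule LeastI_ex)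

lemma apply_op_trailing_zeros:
  assumes "m \<le> J" "\<And>i. m < i \<Longrightarrow> i \<le> J \<Longrightarrow> e i = 0"
  shows "apply_op e J F n = apply_op e m F n"
proof -
  have "apply_op e J F n = (\<Sum>i\<in>{..m} \<union> {m<..J}. poly (e i) (of_nat n) * F (n + i))"
    unfolding apply_op_def using assms(1) by (intro sum.cong) auto
  also have "\<dots> = apply_op e m F n + (\<Sum>i\<in>{m<..J}. poly (e i) (of_nat n) * F (n + i))"
    unfolding apply_op_def by (rule sum.union_disjoint) auto
  also have "(\<Sum>i\<in>{m<..J}. poly (e i) (of_nat n) * F (n + i)) = 0"
    using assms(2) by (intro sum.neutral) auto
  finally show ?thesis
    by simp
qed

lemma rational_recurrence_imp_annihilates:
  fixes F :: "nat \<Rightarrow> 'k::field_char_0" and e :: "nat \<Rightarrow> nat \<Rightarrow> 'k"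
  assumes "\<And>i. i \<le> J \<Longrightarrow> rational_sequence (e i)"
    and "eventually (\<lambda>n. (\<Sum>i\<le>J. e i n * F (n + i)) = 0) sequentially"
  obtains z Y where "Y \<noteq> 0" "annihilates z J F"
    and "\<And>i. i \<le> J \<Longrightarrow> eventually (\<lambda>n. e i n = rat_eval (z i) Y n) sequentially"
proof -
  obtain p q where pq: "\<And>i. i \<le> J \<Longrightarrow> q i \<noteq> 0"
    "\<And>i. i \<le> J \<Longrightarrow> eventually (\<lambda>n. e i n = rat_eval (p i) (q i) n) sequentially"
    using assms(1) unfolding rational_sequence_def by metis
  define Y where "Y = (\<Prod>i\<le>J. q i)"
  define z where "z i = p i * (\<Prod>j\<in>{..J} - {i}. q j)" for i
  have "Y \<noteq> 0"
    using pq(1) by (simp add: Y_def)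
  have Y_split: "Y = q i * (\<Prod>j\<in>{..J} - {i}. q j)" if "i \<le> J" for i
    using that by (simp add: Y_def prod.remove)
  have e_eq: "eventually (\<lambda>n. e i n = rat_eval (z i) Y n) sequentially" if "i \<le> J" for i
    using pq(2)[OF that] eventually_poly_of_nat_nonzero[OF \<open>Y \<noteq> 0\<close>]
  proof eventually_elim
    case (elim n)
    then show ?case
      by (simp add: rat_eval_def z_def Y_split[OF that])
  qed
  have "eventually (\<lambda>n. \<forall>i\<le>J. e i n = rat_eval (z i) Y n) sequentially"
    using e_eq by (rule eventually_all_le)
  then have "annihilates z J F"
    unfolding annihilates_def
    using eventually_poly_of_nat_nonzero[OF \<open>Y \<noteq> 0\<close>] assms(2)
  proof eventually_elim
    case (elim n)
    then have "(\<Sum>i\<le>J. poly (z i) (of_nat n) * F (n + i)) / poly Y (of_nat n) = 0"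
      by (simp add: sum_divide_distrib rat_eval_def)
    with elim show ?case
      by (simp add: apply_op_def)
  qed
  with \<open>Y \<noteq> 0\<close> e_eq show thesis
    using that by blast
qed

lemma annihilators_of_minimal_order_proportional:
  fixes F :: "nat \<Rightarrow> 'k::field"
  assumes "hol_order F = J" "annihilates c J F" "annihilates z J F" "i \<le> J"
  shows "c J * z i = z J * c i"
proof (rule ccontr)
  define e where "e k = c J * z k - z J * c k" for k
  assume "c J * z i \<noteq> z J * c i"
  define S where "S = {k. k \<le> J \<and> e k \<noteq> 0}"
  define m where "m = Max S"
  have "finite S" "i \<in> S"
    using assms(4) \<open>c J * z i \<noteq> z J * c i\<close> by (simp_all add: S_def e_def)
  then have "m \<in> S"
    unfolding m_def by (intro Max_in) auto
  have above_m: "e k = 0" if "m < k" "k \<le> J" for k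
    using Max_ge[OF \<open>finite S\<close>, of k] that unfolding m_def S_def by fastforce
  from \<open>m \<in> S\<close> have "m \<le> J" "e m \<noteq> 0"
    by (simp_all add: S_def)
  have "annihilates e m F"
    using assms(2,3) unfolding annihilates_def
  proof eventually_elim
    case (elim n)
    have "apply_op e J F n =
        poly (c J) (of_nat n) * apply_op z J F n - poly (z J) (of_nat n) * apply_op c J F n"
      by (simp add: apply_op_def e_def sum_distrib_left sum_subtractf algebra_simps)
    with elim show ?case
      using apply_op_trailing_zeros[OF \<open>m \<le> J\<close> above_m] by simp
  qed
  with \<open>e m \<noteq> 0\<close> have "J \<le> m"
    using hol_order_le assms(1) by blast
  moreover have "e J = 0"
    by (simp add: e_def mult.commute)
  ultimately show False
    using \<open>m \<le> J\<close> \<open>e m \<noteq> 0\<close> by simp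
qed

lemma coprime_fraction_exists:
  fixes N M :: "'a::semiring_gcd"
  assumes "M \<noteq> 0"
  obtains P Q where "coprime P Q" "Q \<noteq> 0" "P * M = N * Q"
proof
  let ?g = "gcd N M"
  show "coprime (N div ?g) (M div ?g)"
    using assms by (intro div_gcd_coprime) simp
  show "M div ?g \<noteq> 0"
    using assms by (metis dvd_div_eq_0_iff gcd_dvd2)
  show "N div ?g * M = N * (M div ?g)"
    by (metis dvd_div_mult gcd_dvd1 gcd_dvd2 mult.commute)
qed

lemma rational_recurrence_proportional:
  fixes F :: "nat \<Rightarrow> 'k::{field_char_0,field_gcd}"
  assumes "hol_order F = J" "annihilates c J F" "c J \<noteq> 0"
    and "\<And>i. i \<le> J \<Longrightarrow> rational_sequence (e i)"
    and "eventually (\<lambda>n. (\<Sum>i\<le>J. e i n * F (n + i)) = 0) sequentially"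
  obtains P Q where "coprime P Q" "Q \<noteq> 0"
    and "\<And>i. i \<le> J \<Longrightarrow> eventually (\<lambda>n. e i n = rat_eval P Q n * poly (c i) (of_nat n)) sequentially"
proof -
  obtain z Y where "Y \<noteq> 0" "annihilates z J F"
    and e_eq: "\<And>i. i \<le> J \<Longrightarrow> eventually (\<lambda>n. e i n = rat_eval (z i) Y n) sequentially"
    using rational_recurrence_imp_annihilates[OF assms(4,5)] by blast
  have "c J * Y \<noteq> 0"
    using assms(3) \<open>Y \<noteq> 0\<close> by simp
  then obtain P Q where "coprime P Q" "Q \<noteq> 0" and PQ: "P * (c J * Y) = z J * Q"
    by (rule coprime_fraction_exists)
  have "eventually (\<lambda>n. e i n = rat_eval P Q n * poly (c i) (of_nat n)) sequentially" if "i \<le> J" for i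
    using e_eq[OF that] eventually_poly_of_nat_nonzero[OF \<open>c J * Y \<noteq> 0\<close>]
      eventually_poly_of_nat_nonzero[OF \<open>Q \<noteq> 0\<close>]
  proof eventually_elim
    case (elim n)
    have "c J * (z i * Q) = (c J * z i) * Q"
      by (simp add: mult.assoc)
    also have "\<dots> = c i * (z J * Q)"
      using annihilators_of_minimal_order_proportional[OF assms(1,2) \<open>annihilates z J F\<close> that]
      by (simp add: mult_ac)
    also have "\<dots> = c J * (P * c i * Y)"
      using PQ by (simp add: mult_ac)
    finally have "z i * Q = P * c i * Y"
      using assms(3) by simp
    then have "poly (z i) (of_nat n) * poly Q (of_nat n) = poly P (of_nat n) * poly (c i) (of_nat n) * poly Y (of_nat n)"
      by (metis poly_mult)
    with elim show ?case
      by (simp add: rat_eval_def frac_eq_eq mult_ac)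
  qed
  with \<open>coprime P Q\<close> \<open>Q \<noteq> 0\<close> show thesis
    using that by blast
qed

lemma annihilates_rational_multiple:
  fixes F G :: "nat \<Rightarrow> 'k::field_char_0"
  assumes "\<alpha> \<noteq> 0" "\<beta> \<noteq> 0" "eventually (\<lambda>n. G n = rat_eval \<alpha> \<beta> n * F n) sequentially"
    and "annihilates d K F" "d K \<noteq> 0"
  obtains d' where "d' K \<noteq> 0" "annihilates d' K G"
proof -
  define e where "e i n = poly (d i) (of_nat n) * rat_eval \<beta> \<alpha> (n + i)" for i n
  have nonzero: "eventually (\<lambda>n. poly \<alpha> (of_nat n) \<noteq> 0 \<and> poly \<beta> (of_nat n) \<noteq> 0) sequentially"
    using assms(1,2) by (intro eventually_conj eventually_poly_of_nat_nonzero)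
  have "eventually (\<lambda>n. \<forall>i\<le>K. G (n + i) = rat_eval \<alpha> \<beta> (n + i) * F (n + i) \<and>
      poly \<alpha> (of_nat (n + i)) \<noteq> 0 \<and> poly \<beta> (of_nat (n + i)) \<noteq> 0) sequentially"
    using eventually_conj[OF assms(3) nonzero]
    by (intro eventually_all_le) (rule eventually_sequentially_seg[THEN iffD2])
  then have "eventually (\<lambda>n. (\<Sum>i\<le>K. e i n * G (n + i)) = 0) sequentially"
    using assms(4) unfolding annihilates_def
  proof eventually_elim
    case (elim n)
    then have "(\<Sum>i\<le>K. e i n * G (n + i)) = apply_op d K F n"
      unfolding apply_op_def by (intro sum.cong) (auto simp: e_def rat_eval_def)
    with elim show ?case
      by simp
  qed
  moreover have "rational_sequence (e i)" for i
    unfolding e_def using assms(1)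
    by (intro rational_sequence_mult rational_sequence_poly rational_sequence_shift rational_sequence_rat_eval)
  ultimately obtain z Y where "annihilates z K G"
    and e_eq: "eventually (\<lambda>n. e K n = rat_eval (z K) Y n) sequentially"
    using rational_recurrence_imp_annihilates[of K e G] by blast
  have "z K \<noteq> 0"
  proof
    assume "z K = 0"
    have "eventually (\<lambda>n. poly \<alpha> (of_nat (n + K)) \<noteq> 0 \<and> poly \<beta> (of_nat (n + K)) \<noteq> 0) sequentially"
      using nonzero by (rule eventually_sequentially_seg[THEN iffD2])
    with e_eq eventually_poly_of_nat_nonzero[OF assms(5)] have "eventually (\<lambda>n. False) sequentially"
      by eventually_elim (simp add: e_def rat_eval_def \<open>z K = 0\<close>)
    then show False
      by simp
  qed
  with \<open>annihilates z K G\<close> show thesis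
    using that by blast
qed

lemma hol_order_rational_multiple:
  fixes F G :: "nat \<Rightarrow> 'k::field_char_0"
  assumes "holonomic F" "\<alpha> \<noteq> 0" "\<beta> \<noteq> 0"
    and "eventually (\<lambda>n. G n = rat_eval \<alpha> \<beta> n * F n) sequentially"
  shows "hol_order G = hol_order F"
proof (rule antisym)
  obtain d where "d (hol_order F) \<noteq> 0" "annihilates d (hol_order F) F"
    using holonomic_imp_minimal_annihilator[OF assms(1)] by blast
  then obtain d' where d': "d' (hol_order F) \<noteq> 0" "annihilates d' (hol_order F) G"
    using annihilates_rational_multiple[OF assms(2-4)] by blast
  then show "hol_order G \<le> hol_order F"
    by (rule hol_order_le)
  have "holonomic G"
    using d' unfolding holonomic_def by blast
  then obtain e where "e (hol_order G) \<noteq> 0" "annihilates e (hol_order G) G"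
    using holonomic_imp_minimal_annihilator by blast
  moreover have "eventually (\<lambda>n. F n = rat_eval \<beta> \<alpha> n * G n) sequentially"
    using assms(4) eventually_poly_of_nat_nonzero[OF assms(2)] eventually_poly_of_nat_nonzero[OF assms(3)]
    by eventually_elim (simp add: rat_eval_def)
  ultimately obtain e' where "e' (hol_order G) \<noteq> 0" "annihilates e' (hol_order G) F"
    using annihilates_rational_multiple[OF assms(3,2)] by metis
  then show "hol_order F \<le> hol_order G"
    by (rule hol_order_le)
qed

section \<open>The recurrence of a summable multiple\<close>

lemma sum_atMost_if_pos:
  fixes J :: nat
  shows "(\<Sum>i\<le>J. if 0 < i then f (i - 1) else 0) = (\<Sum>i<J. f i)"
  by (induction J) auto

lemma sum_atMost_if_less:
  fixes J :: nat
  shows "(\<Sum>i\<le>J. if i < J then f i else 0) = (\<Sum>i<J. f i)"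
proof -
  have "(\<Sum>i\<le>J. if i < J then f i else 0) = (\<Sum>i<J. if i < J then f i else 0)"
    by (simp add: lessThan_Suc_atMost[symmetric])
  also have "\<dots> = (\<Sum>i<J. f i)"
    by (rule sum.cong) auto
  finally show ?thesis .
qed

(* The coefficient of F (n + i) in R F - Delta (sum_(i<J) U_i sigma^i (R F)). *)
definition delta_recurrence_coeff ::
    "(nat \<Rightarrow> 'a::comm_ring_1) \<Rightarrow> (nat \<Rightarrow> nat \<Rightarrow> 'a) \<Rightarrow> nat \<Rightarrow> nat \<Rightarrow> nat \<Rightarrow> 'a" where
  "delta_recurrence_coeff R U J i n =
     ((if 0 < i then U (i - 1) (n + 1) else 0) - (if i < J then U i n else 0)) * R (n + i)
     - (if i = 0 then R n else 0)"

lemma sum_delta_recurrence_coeff: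
  "(\<Sum>i\<le>J. delta_recurrence_coeff R U J i n * F (n + i)) =
     (\<Sum>i<J. U i (n + 1) * (R (n + 1 + i) * F (n + 1 + i)))
     - (\<Sum>i<J. U i n * (R (n + i) * F (n + i))) - R n * F n"
proof -
  have "(\<Sum>i\<le>J. delta_recurrence_coeff R U J i n * F (n + i)) =
      (\<Sum>i\<le>J. if 0 < i then U (i - 1) (n + 1) * (R (n + 1 + (i - 1)) * F (n + 1 + (i - 1))) else 0)
      - (\<Sum>i\<le>J. if i < J then U i n * (R (n + i) * F (n + i)) else 0)
      - (\<Sum>i\<le>J. if i = 0 then R n * F n else 0)"
    unfolding sum_subtractf[symmetric] delta_recurrence_coeff_def
    by (intro sum.cong) (auto simp: algebra_simps)
  then show ?thesis
    by (simp only: sum_atMost_if_pos[where f = "\<lambda>k. U k (n + 1) * (R (n + 1 + k) * F (n + 1 + k))"]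
        sum_atMost_if_less) simp
qed

lemma sum_delta_recurrence_coeff_adjoint:
  "(\<Sum>i\<le>J. delta_recurrence_coeff R U J i (n + (J - i))) = - R (n + J)"
proof -
  have "(\<Sum>i\<le>J. delta_recurrence_coeff R U J i (n + (J - i))) =
      ((\<Sum>i\<le>J. if 0 < i then U (i - 1) (n + (J - Suc (i - 1)) + 1) else 0)
      - (\<Sum>i\<le>J. if i < J then U i (n + (J - i)) else 0)) * R (n + J)
      - (\<Sum>i\<le>J. if i = 0 then R (n + J) else 0)"
    unfolding sum_subtractf[symmetric] sum_distrib_right delta_recurrence_coeff_def
    by (intro sum.cong) (auto simp: algebra_simps)
  also have "\<dots> = - R (n + J)"
    by (simp only: sum_atMost_if_pos[where f = "\<lambda>k. U k (n + (J - Suc k) + 1)"] sum_atMost_if_less)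
      (simp add: Suc_diff_Suc)
  finally show ?thesis .
qed

lemma rational_sequence_delta_recurrence_coeff:
  fixes R :: "nat \<Rightarrow> 'k::field_char_0"
  assumes "rational_sequence R" "\<And>j. j < J \<Longrightarrow> rational_sequence (U j)" "i \<le> J"
  shows "rational_sequence (delta_recurrence_coeff R U J i)"
proof -
  have eq: "delta_recurrence_coeff R U J i = (\<lambda>n.
     ((if 0 < i then U (i - 1) (n + 1) else 0) - (if i < J then U i n else 0)) * R (n + i)
     - (if i = 0 then R n else 0))"
    by (rule ext) (rule delta_recurrence_coeff_def)
  have "rational_sequence (\<lambda>n. if 0 < i then U (i - 1) (n + 1) else 0)"
  proof (rule rational_sequence_if)
    assume "0 < i"
    with assms(2,3) show "rational_sequence (\<lambda>n. U (i - 1) (n + 1))"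
      by (intro rational_sequence_shift[of "U (i - 1)"]) simp
  qed (rule rational_sequence_const)
  moreover have "rational_sequence (\<lambda>n. if i < J then U i n else 0)"
    by (rule rational_sequence_if) (use assms(2) in \<open>simp_all add: rational_sequence_const\<close>)
  moreover have "rational_sequence (\<lambda>n. if i = 0 then R n else 0)"
    by (rule rational_sequence_if) (use assms(1) in \<open>simp_all add: rational_sequence_const\<close>)
  moreover have "rational_sequence (\<lambda>n. R (n + i))"
    using assms(1) by (rule rational_sequence_shift)
  ultimately show ?thesis
    unfolding eq by (intro rational_sequence_diff rational_sequence_mult)
qed

lemma summable_multiple_recurrence:
  fixes F R :: "nat \<Rightarrow> 'k::field_char_0"
  assumes "hol_order (\<lambda>n. R n * F n) = J" "summable_hol (\<lambda>n. R n * F n)" "rational_sequence R"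
  obtains U where "\<And>i. i \<le> J \<Longrightarrow> rational_sequence (delta_recurrence_coeff R U J i)"
    and "eventually (\<lambda>n. (\<Sum>i\<le>J. delta_recurrence_coeff R U J i n * F (n + i)) = 0) sequentially"
proof -
  obtain p q where "\<And>i. i < J \<Longrightarrow> q i \<noteq> 0"
    and "eventually (\<lambda>n. R n * F n =
      (\<Sum>i<J. rat_eval (p i) (q i) (n + 1) * (R (n + 1 + i) * F (n + 1 + i)))
      - (\<Sum>i<J. rat_eval (p i) (q i) n * (R (n + i) * F (n + i)))) sequentially"
    using assms(1,2) unfolding summable_hol_def by auto
  define U where "U i = rat_eval (p i) (q i)" for i
  have "eventually (\<lambda>n. (\<Sum>i\<le>J. delta_recurrence_coeff R U J i n * F (n + i)) = 0) sequentially"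
    using \<open>eventually _ sequentially\<close> by eventually_elim (simp add: sum_delta_recurrence_coeff U_def)
  moreover have "rational_sequence (delta_recurrence_coeff R U J i)" if "i \<le> J" for i
    using that assms(3) \<open>\<And>i. i < J \<Longrightarrow> q i \<noteq> 0\<close>
    by (intro rational_sequence_delta_recurrence_coeff) (simp_all add: U_def rational_sequence_rat_eval)
  ultimately show thesis
    using that by blast
qed

section \<open>The adjoint identity\<close>

lemma sum_divide_mult_prod:
  fixes x y :: "'b \<Rightarrow> 'a::field"
  assumes "finite A" "\<And>i. i \<in> A \<Longrightarrow> y i \<noteq> 0"
  shows "(\<Sum>i\<in>A. x i / y i) * (\<Prod>i\<in>A. y i) = (\<Sum>i\<in>A. x i * (\<Prod>j\<in>A - {i}. y j))"
  unfolding sum_distrib_right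
proof (rule sum.cong)
  fix i assume "i \<in> A"
  then show "x i / y i * (\<Prod>i\<in>A. y i) = x i * (\<Prod>j\<in>A - {i}. y j)"
    using assms by (simp add: prod.remove)
qed simp

(* sigma^J (a/b) = - (sum i<=J. sigma^(J-i) (P/Q * c_i)), multiplied by sigma^J b and by all the
   denominators sigma^(J-i) Q. *)
definition adjoint_identity ::
    "nat \<Rightarrow> 'k::comm_ring_1 poly \<Rightarrow> 'k poly \<Rightarrow> 'k poly \<Rightarrow> 'k poly \<Rightarrow> (nat \<Rightarrow> 'k poly) \<Rightarrow> bool" where
  "adjoint_identity J a b P Q c \<longleftrightarrow>
    - translate (of_nat J) a * (\<Prod>i\<le>J. translate (of_nat (J - i)) Q) =
    translate (of_nat J) b *
      (\<Sum>i\<le>J. translate (of_nat (J - i)) (P * c i) * (\<Prod>j\<in>{..J} - {i}. translate (of_nat (J - j)) Q))"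

lemma cleared_adjoint_identity:
  fixes a b P Q :: "'k::field_char_0 poly" and c :: "nat \<Rightarrow> 'k poly"
  assumes "b \<noteq> 0" "Q \<noteq> 0"
    and "\<And>i. i \<le> J \<Longrightarrow> eventually (\<lambda>n. delta_recurrence_coeff (rat_eval a b) U J i n =
      rat_eval P Q n * poly (c i) (of_nat n)) sequentially"
  shows "adjoint_identity J a b P Q c"
  unfolding adjoint_identity_def
proof (rule poly_eqI_eventually, goal_cases)
  case 1
  have "eventually (\<lambda>n. \<forall>i\<le>J.
      delta_recurrence_coeff (rat_eval a b) U J i (n + (J - i)) =
        rat_eval P Q (n + (J - i)) * poly (c i) (of_nat (n + (J - i))) \<and>
      poly Q (of_nat (n + (J - i))) \<noteq> 0) sequentially"
    using assms(3) eventually_poly_of_nat_nonzero[OF assms(2)]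
    by (intro eventually_all_le eventually_sequentially_seg[THEN iffD2] eventually_conj)
  moreover have "eventually (\<lambda>n. poly b (of_nat (n + J)) \<noteq> 0) sequentially"
    using eventually_poly_of_nat_nonzero[OF assms(1)] by (rule eventually_sequentially_seg[THEN iffD2])
  ultimately show ?case
  proof eventually_elim
    case (elim n)
    define q where "q j = poly Q (of_nat (n + (J - j)))" for j
    define t where "t i = poly (P * c i) (of_nat (n + (J - i)))" for i
    have "q j \<noteq> 0" if "j \<le> J" for j
      using elim that by (simp add: q_def)
    have "- rat_eval a b (n + J) = (\<Sum>i\<le>J. t i / q i)"
      using elim sum_delta_recurrence_coeff_adjoint[of "rat_eval a b" U J n, symmetric]
      by (simp add: t_def q_def rat_eval_def)
    then have "- rat_eval a b (n + J) * (\<Prod>j\<le>J. q j) = (\<Sum>i\<le>J. t i * (\<Prod>j\<in>{..J} - {i}. q j))"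
      using sum_divide_mult_prod[of "{..J}" q t] \<open>\<And>j. j \<le> J \<Longrightarrow> q j \<noteq> 0\<close> by simp
    then have "- poly a (of_nat (n + J)) * (\<Prod>j\<le>J. q j) =
        poly b (of_nat (n + J)) * (\<Sum>i\<le>J. t i * (\<Prod>j\<in>{..J} - {i}. q j))"
      using elim by (simp add: rat_eval_def field_simps)
    moreover have "poly (translate (of_nat (J - j)) Q) (of_nat n) = q j"
      and "poly (translate (of_nat (J - j)) (P * c j)) (of_nat n) = t j"
      and "poly (translate (of_nat J) p) (of_nat n) = poly p (of_nat (n + J))" for j and p :: "'k poly"
      by (simp_all add: q_def t_def)
    ultimately show ?case
      by (simp only: poly_mult poly_minus poly_prod poly_sum)
  qed
qed

lemma prime_dvd_cleared_sum:
  fixes \<pi> :: "'a::{factorial_semiring, normalization_semidom}"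
  assumes "prime_elem \<pi>" "finite A" "k \<in> A" "\<pi> dvd D k" "\<forall>j\<in>A - {k}. \<not> \<pi> dvd D j"
    and "X * (\<Prod>i\<in>A. D i) = B * (\<Sum>i\<in>A. N i * (\<Prod>j\<in>A - {i}. D j))"
  shows "\<pi> dvd B \<or> \<pi> dvd N k"
proof -
  have others: "\<pi> dvd N i * (\<Prod>j\<in>A - {i}. D j)" if "i \<in> A - {k}" for i
    using that assms(2-4) by (metis DiffI dvd_mult dvd_prodI dvd_trans finite_Diff singletonD)
  have "\<pi> dvd X * (\<Prod>i\<in>A. D i)"
    using assms(2-4) by (meson dvd_mult dvd_prodI dvd_trans)
  then have "\<pi> dvd B * (N k * (\<Prod>j\<in>A - {k}. D j) + (\<Sum>i\<in>A - {k}. N i * (\<Prod>j\<in>A - {i}. D j)))"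
    using assms(2,3,6) by (simp add: sum.remove)
  moreover have "\<pi> dvd B * (\<Sum>i\<in>A - {k}. N i * (\<Prod>j\<in>A - {i}. D j))"
    by (rule dvd_mult, rule dvd_sum) (fact others)
  ultimately have "\<pi> dvd B * N k * (\<Prod>j\<in>A - {k}. D j)"
    by (simp add: distrib_left dvd_add_left_iff mult.assoc)
  moreover have "\<not> \<pi> dvd (\<Prod>j\<in>A - {k}. D j)"
    using assms(1,2,5) prime_dvd_prod_iff[of "A - {k}" "normalize \<pi>" D] by simp
  ultimately show ?thesis
    using assms(1) by (simp add: prime_elem_dvd_mult_iff)
qed

lemma prime_dvd_adjoint_identity_term:
  fixes \<pi> :: "'k::{field_char_0,field_gcd} poly"
  assumes "adjoint_identity J a b P Q c" "coprime P Q"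
    and "prime_elem \<pi>" "k \<le> J" "\<pi> dvd translate (of_nat (J - k)) Q"
    and "\<forall>j\<in>{..J} - {k}. \<not> \<pi> dvd translate (of_nat (J - j)) Q"
  shows "\<pi> dvd translate (of_nat J) b \<or> \<pi> dvd translate (of_nat (J - k)) (c k)"
proof -
  have "\<not> \<pi> dvd translate (of_nat (J - k)) P"
  proof
    assume "\<pi> dvd translate (of_nat (J - k)) P"
    with assms(5) have "is_unit (translate (- of_nat (J - k)) \<pi>)"
      using \<open>coprime P Q\<close> by (metis coprime_common_divisor translate_dvd_iff minus_minus)
    with assms(3) show False
      by (simp add: prime_elem_def)
  qed
  moreover have "\<pi> dvd translate (of_nat J) b \<or> \<pi> dvd translate (of_nat (J - k)) (P * c k)"
    using prime_dvd_cleared_sum[OF assms(3) finite_atMost _ assms(5,6) assms(1)[unfolded adjoint_identity_def]]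
      assms(4) by simp
  ultimately show ?thesis
    using assms(3) by (auto simp: prime_elem_dvd_mult_iff)
qed

lemma adjoint_identity_imp_unit_denominator:
  fixes a b P Q :: "'k::{field_char_0,field_gcd} poly" and c :: "nat \<Rightarrow> 'k poly"
  assumes "adjoint_identity J a b P Q c" "coprime P Q" "Q \<noteq> 0"
    and "\<forall>h::nat. gcd (c 0) (shift_poly h (c J)) = 1 \<and> gcd b (shift_poly (J + h) b) = 1"
    and "\<forall>h::nat. gcd (c 0) (shift_poly (J + h) b) = 1 \<and> gcd b (shift_poly h (c J)) = 1"
  shows "is_unit Q"
proof (rule ccontr)
  assume "\<not> is_unit Q"
  then obtain g h where g: "prime_elem g" "g dvd Q" "translate (of_nat h) g dvd Q"
    and extremal: "\<And>t::int. translate (of_int t) g dvd Q \<Longrightarrow> 0 \<le> t \<and> t \<le> int h"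
    using extremal_translates_dvd[OF assms(3)] by blast
  note cleared = prime_dvd_adjoint_identity_term[OF assms(1,2)]
  have extremal': "0 \<le> s - r \<and> s - r \<le> int h"
    if "translate (of_int s) g dvd translate (of_int r) Q" for s r
    using extremal[of "s - r"] that by (simp add: translate_dvd_translate_iff_diff)
  have top: "translate (of_nat h) g dvd b \<or> translate (of_nat h) g dvd c 0"
  proof -
    have "\<not> translate (of_nat (J + h)) g dvd translate (of_nat (J - j)) Q" if "j \<in> {..J} - {0}" for j
      using that extremal'[of "int (J + h)" "int (J - j)"] by auto
    with cleared[OF prime_elem_translate[OF g(1)], of 0 "of_nat (J + h)"] g(3) show ?thesis
      by (simp add: translate_dvd_translate_iff_diff)
  qed
  have bottom: "translate (of_nat h) g dvd shift_poly (J + h) b \<or> translate (of_nat h) g dvd shift_poly h (c J)"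
  proof -
    have "\<not> g dvd translate (of_nat (J - j)) Q" if "j \<in> {..J} - {J}" for j
      using that extremal'[of 0 "int (J - j)"] by auto
    with cleared[OF g(1), of J] g(2) have "g dvd translate (of_nat J) b \<or> g dvd c J"
      by simp
    then have "translate (of_nat h) g dvd translate (of_nat h) (translate (of_nat J) b) \<or>
        translate (of_nat h) g dvd translate (of_nat h) (c J)"
      by (simp only: translate_dvd_translate_iff)
    then show ?thesis
      by (simp add: shift_poly_eq_translate add.commute)
  qed
  have "is_unit (translate (of_nat h) g)"
    using top bottom assms(4,5) by (metis gcd_greatest)
  with g(1) show False
    by (simp add: prime_elem_def)
qed

lemma adjoint_identity_unit_imp_dvd:
  fixes a b Q :: "'k::field poly"
  assumes "adjoint_identity J a b P Q c" "is_unit Q"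
  shows "b dvd a"
proof -
  have "is_unit (\<Prod>i\<le>J. translate (of_nat (J - i)) Q)"
    using assms(2) prod_dvd_prod[of "{..J}" "\<lambda>i. translate (of_nat (J - i)) Q" "\<lambda>_. 1"] by simp
  moreover have "translate (of_nat J) b dvd - translate (of_nat J) a * (\<Prod>i\<le>J. translate (of_nat (J - i)) Q)"
    using assms(1) unfolding adjoint_identity_def by simp
  ultimately have "translate (of_nat J) b dvd translate (of_nat J) a"
    by (simp add: dvd_mult_unit_iff)
  then show ?thesis
    by simp
qed

theorem theorem3p1:
  fixes F :: "nat \<Rightarrow> 'k::{field_char_0,field_gcd}"
    and J :: nat
    and c :: "nat \<Rightarrow> 'k poly"
    and a b :: "'k poly"
  assumes "holonomic F"
    and "hol_order F = J"
    and "J > 0"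
    and "annihilates c J F"
    and "c 0 * c J \<noteq> 0"
    and "b \<noteq> 0"
    and "summable_hol (\<lambda>n. rat_eval a b n * F n)"
    and "\<forall>h::nat. gcd (c 0) (shift_poly h (c J)) = 1 \<and> gcd b (shift_poly (J + h) b) = 1"
    and "\<forall>h::nat. gcd (c 0) (shift_poly (J + h) b) = 1 \<and> gcd b (shift_poly h (c J)) = 1"
  shows "b dvd a"
proof (cases "a = 0")
  case False
  have "hol_order (\<lambda>n. rat_eval a b n * F n) = J"
    using hol_order_rational_multiple[OF assms(1) False assms(6)] assms(2) by simp
  then obtain U where rational: "\<And>i. i \<le> J \<Longrightarrow> rational_sequence (delta_recurrence_coeff (rat_eval a b) U J i)"
    and recurrence: "eventually (\<lambda>n. (\<Sum>i\<le>J. delta_recurrence_coeff (rat_eval a b) U J i n * F (n + i)) = 0)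
      sequentially"
    using summable_multiple_recurrence[OF _ assms(7) rational_sequence_rat_eval[OF assms(6)]] by blast
  have "c J \<noteq> 0"
    using assms(5) by simp
  obtain P Q where "coprime P Q" "Q \<noteq> 0"
    and "\<And>i. i \<le> J \<Longrightarrow> eventually (\<lambda>n. delta_recurrence_coeff (rat_eval a b) U J i n =
      rat_eval P Q n * poly (c i) (of_nat n)) sequentially"
    using rational_recurrence_proportional[OF assms(2,4) \<open>c J \<noteq> 0\<close> rational recurrence] by blast
  then have identity: "adjoint_identity J a b P Q c"
    by (intro cleared_adjoint_identity[OF assms(6)])
  have "is_unit Q"
    using identity \<open>coprime P Q\<close> \<open>Q \<noteq> 0\<close> assms(8,9) by (rule adjoint_identity_imp_unit_denominator)
  with identity show ?thesis
    by (rule adjoint_identity_unit_imp_dvd)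
qed simp

end
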